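(* Let $M$ be a compact Polish metric space, let $\bar a=(a_0,\dots,a_{p-1})$ and $\bar b=(b_0,\dots,b_{p-1})$ be tuples from $M$, and let $(A_n:n\in\omega)$ be a sequence of finite subsets of $M$ with $A_n\subseteq A_{n+1}$ and $\bigcup_{z\in A_n}B_{2^{-n}}(z)=M$ for all $n$. If $\mathrm{SR}(\bar a,\bar b)>\omega$, then there is a compact approximation system for $M,\bar a,\bar b$ with respect to $(A_n:n\in\omega)$.
   Context: $B_r(z)$ denotes the open ball of radius $r$ about $z$. $M$ is viewed as a structure in the language $\mathscr{U}=\{\dot d_q,\dot d^q:q\in\mathbb{Q}^+\}$ with $\dot d_q(x,y)\Leftrightarrow d(x,y)<q$ and $\dot d^q(x,y)\Leftrightarrow d(x,y)>q$. Back-and-forth relations on equal-length tuples: $\bar a\sim_0\bar b$ iff $a_i\mapsto b_i$ is a partial $\mathscr{U}$-isomorphism (i.e. a partial isometry); $\bar a\sim_{\alpha+1}\bar b$ iff for every $a\in M$ there is $b\in M$ with $\bar a a\sim_\alpha\bar b b$ and for every $b\in M$ there is $a\in M$ with $\bar a a\sim_\alpha\bar b b$; at limits $\beta$, $\sim_\beta$ is the intersection of $\sim_\alpha$, $\alpha<\beta$. $\mathrm{SR}(\bar a,\bar b)$ is the least $\mu$ with $\neg(\bar a\sim_\mu\bar b)$ (or $\infty$). A compact approximation system for $M,\bar a,\bar b$ with respect to $(A_n)$ is a sequence $(\varphi_n:n\in\omega)$ such that for every $n$: (i) $\varphi_n:A_n\to A_n$; (ii) for all $i<p$ and $z\in A_n$,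 $|d(a_i,z)-d(b_i,\varphi_n(z))|<2^{-n}$; (iii) for all $m\le n$, $y\in A_m$, $z\in A_n$, $|d(y,z)-d(\varphi_m(y),\varphi_n(z))|<2^{-m}+2^{-n}$; (iv) $\bigcup_{z\in A_n}B_{2^{-(n-1)}}(\varphi_n(z))=M$. *)

theory Defs
  imports "HOL-Analysis.Analysis"
begin

text \<open>Tuples are lists. The map a_i to b_i is a partial isomorphism for the language
  with relations d_q (distance < q) and d^q (distance > q), q positive rational.\<close>
definition partial_iso :: "'a::metric_space list \<Rightarrow> 'a list \<Rightarrow> bool" where
  "partial_iso as bs \<longleftrightarrow> length as = length bs \<and>
     (\<forall>i<length as. \<forall>j<length as. \<forall>q\<in>\<rat>. q > 0 \<longrightarrow>
        (dist (as!i) (as!j) < q \<longleftrightarrow> dist (bs!i) (bs!j) < q) \<and>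
        (dist (as!i) (as!j) > q \<longleftrightarrow> dist (bs!i) (bs!j) > q))"

fun bf_sim :: "'a::metric_space set \<Rightarrow> nat \<Rightarrow> 'a list \<Rightarrow> 'a list \<Rightarrow> bool" where
  "bf_sim M 0 as bs = partial_iso as bs"
| "bf_sim M (Suc n) as bs =
     ((\<forall>x\<in>M. \<exists>y\<in>M. bf_sim M n (as @ [x]) (bs @ [y])) \<and>
      (\<forall>y\<in>M. \<exists>x\<in>M. bf_sim M n (as @ [x]) (bs @ [y])))"

text \<open>SR(as,bs) > omega  iff  as ~_mu bs for all mu \<le> omega  iff  as ~_omega bs
  iff  as ~_n bs for every finite n (since ~_omega is the intersection of the ~_n).\<close>
definition SR_gt_omega :: "'a::metric_space set \<Rightarrow> 'a list \<Rightarrow> 'a list \<Rightarrow> bool" where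
  "SR_gt_omega M as bs \<longleftrightarrow> (\<forall>n. bf_sim M n as bs)"

definition compact_approx_system ::
  "'a::metric_space set \<Rightarrow> 'a list \<Rightarrow> 'a list \<Rightarrow> (nat \<Rightarrow> 'a set) \<Rightarrow> (nat \<Rightarrow> 'a \<Rightarrow> 'a) \<Rightarrow> bool" where
  "compact_approx_system M as bs A \<phi> \<longleftrightarrow>
     (\<forall>n.
       (\<forall>z\<in>A n. \<phi> n z \<in> A n) \<and>
       (\<forall>i<length as. \<forall>z\<in>A n. \<bar>dist (as!i) z - dist (bs!i) (\<phi> n z)\<bar> < 1 / 2^n) \<and>
       (\<forall>m\<le>n. \<forall>y\<in>A m. \<forall>z\<in>A n.
          \<bar>dist y z - dist (\<phi> m y) (\<phi> n z)\<bar> < 1 / 2^m + 1 / 2^n) \<and>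
       M \<inter> (\<Union>z\<in>A n. ball (\<phi> n z) (2 / 2^n)) = M)"

end

theory Submission
  imports Defs
begin

text \<open>Write ~_n for bf_sim M n. In a compact space each ~_n is closed under limits of
  tuples, so if as ~_n bs for all n, then every x has a partner y with as x ~_n bs y for all n
  (a limit of partners for larger and larger n). Iterating this along an enumeration of the
  countable set of all net points gives a distance-preserving map h on the net with
  d(a_i, z) = d(b_i, h z). By the back property of ~_1, every x in M is the image of some x'
  at the same distances from finitely many net points; approximating x' by z in A n puts h z
  within 2^-n of x. Now phi n z is any point of A n within 2^-n of h z, and the approximation
  errors add up to the required bounds.\<close>

lemma partial_iso_iff_dist_eq:
  "partial_iso xs ys \<longleftrightarrow> length xs = length ys \<and>
     (\<forall>i<length xs. \<forall>j<length xs. dist (xs!i) (xs!j) = dist (ys!i) (ys!j))"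
proof
  assume iso: "partial_iso xs ys"
  have "dist (xs!i) (xs!j) = dist (ys!i) (ys!j)" if "i < length xs" "j < length xs" for i j
  proof (rule ccontr)
    let ?d = "dist (xs!i) (xs!j)" and ?e = "dist (ys!i) (ys!j)"
    assume "?d \<noteq> ?e"
    then have "min ?d ?e < max ?d ?e" by linarith
    then obtain q where q: "q \<in> \<rat>" "min ?d ?e < q" "q < max ?d ?e"
      using Rats_dense_in_real by blast
    moreover have "q > 0"
      using q(2) zero_le_dist[of "xs!i" "xs!j"] zero_le_dist[of "ys!i" "ys!j"] by linarith
    ultimately show False
      using iso that unfolding partial_iso_def by (auto simp: min_def max_def split: if_splits)
  qed
  then show "length xs = length ys \<and>
     (\<forall>i<length xs. \<forall>j<length xs. dist (xs!i) (xs!j) = dist (ys!i) (ys!j))"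
    using iso unfolding partial_iso_def by blast
qed (auto simp: partial_iso_def)

lemma partial_iso_snocD:
  assumes "partial_iso (xs @ [x]) (ys @ [y])"
  shows "partial_iso xs ys"
proof -
  have "length xs = length ys" using assms by (simp add: partial_iso_iff_dist_eq)
  moreover have "dist (xs!i) (xs!j) = dist (ys!i) (ys!j)" if "i < length xs" "j < length xs" for i j
  proof -
    have "dist ((xs @ [x])!i) ((xs @ [x])!j) = dist ((ys @ [y])!i) ((ys @ [y])!j)"
      using assms that unfolding partial_iso_iff_dist_eq by simp
    then show ?thesis using that \<open>length xs = length ys\<close> by (simp add: nth_append)
  qed
  ultimately show ?thesis by (simp add: partial_iso_iff_dist_eq)
qed

lemma bf_sim_SucD:
  assumes "M \<noteq> {}" "bf_sim M (Suc k) xs ys"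
  shows "bf_sim M k xs ys"
  using assms(2)
proof (induction k arbitrary: xs ys)
  case 0
  obtain x where "x \<in> M" using assms(1) by blast
  then obtain y where "partial_iso (xs @ [x]) (ys @ [y])" using 0 by auto
  then show ?case by (simp add: partial_iso_snocD)
next
  case (Suc k)
  then show ?case by (metis bf_sim.simps(2))
qed

lemma bf_sim_antimono:
  assumes "M \<noteq> {}" "k \<le> l" "bf_sim M l xs ys"
  shows "bf_sim M k xs ys"
  using assms(2,3) by (induction rule: inc_induct) (auto intro: bf_sim_SucD[OF assms(1)])

definition list_tendsto :: "(nat \<Rightarrow> 'a::metric_space list) \<Rightarrow> 'a list \<Rightarrow> bool" where
  "list_tendsto xs x \<longleftrightarrow>
     (\<forall>j. length (xs j) = length x) \<and> (\<forall>i<length x. (\<lambda>j. xs j ! i) \<longlonglongrightarrow> x ! i)"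

lemma list_tendsto_const: "list_tendsto (\<lambda>j. x) x"
  unfolding list_tendsto_def by auto

lemma list_tendsto_subseq:
  "list_tendsto xs x \<Longrightarrow> strict_mono r \<Longrightarrow> list_tendsto (\<lambda>j. xs (r j)) x"
  unfolding list_tendsto_def using LIMSEQ_subseq_LIMSEQ[unfolded comp_def] by blast

lemma list_tendsto_snoc:
  assumes "list_tendsto xs x" "v \<longlonglongrightarrow> v0"
  shows "list_tendsto (\<lambda>j. xs j @ [v j]) (x @ [v0])"
  using assms unfolding list_tendsto_def
  by (auto simp: nth_append less_Suc_eq simp del: upt_Suc)

lemma bf_sim_limit:
  assumes "compact M" "list_tendsto xs x" "list_tendsto ys y" "\<And>j. bf_sim M k (xs j) (ys j)"
  shows "bf_sim M k x y"
  using assms(2-4)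
proof (induction k arbitrary: xs ys x y)
  case 0
  have iso: "partial_iso (xs j) (ys j)" for j using 0(3) by simp
  have len: "length x = length y"
    using iso[of 0] 0(1,2) unfolding partial_iso_iff_dist_eq list_tendsto_def by metis
  have "dist (x!i) (x!i') = dist (y!i) (y!i')" if "i < length x" "i' < length x" for i i'
  proof (rule LIMSEQ_unique)
    show "(\<lambda>j. dist (xs j!i) (xs j!i')) \<longlonglongrightarrow> dist (x!i) (x!i')"
      using 0(1) that unfolding list_tendsto_def by (intro tendsto_dist) auto
    have "(\<lambda>j. dist (xs j!i) (xs j!i')) = (\<lambda>j. dist (ys j!i) (ys j!i'))"
      using iso 0(1) that unfolding partial_iso_iff_dist_eq list_tendsto_def by auto
    then show "(\<lambda>j. dist (xs j!i) (xs j!i')) \<longlonglongrightarrow> dist (y!i) (y!i')"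
      using 0(2) that len unfolding list_tendsto_def by (auto intro: tendsto_dist)
  qed
  then show ?case using len by (simp add: partial_iso_iff_dist_eq)
next
  case (Suc k)
  have seq: "seq_compact M" using assms(1) compact_imp_seq_compact by blast
  have forth: "\<exists>w\<in>M. bf_sim M k (x @ [u]) (y @ [w])" if "u \<in> M" for u
  proof -
    have "\<forall>j. \<exists>w\<in>M. bf_sim M k (xs j @ [u]) (ys j @ [w])"
      using Suc.prems(3) \<open>u \<in> M\<close> by simp
    then obtain v where v: "\<And>j. v j \<in> M" "\<And>j. bf_sim M k (xs j @ [u]) (ys j @ [v j])"
      by metis
    then obtain l r where "l \<in> M" "strict_mono r" "(v \<circ> r) \<longlonglongrightarrow> l"
      using seq_compactE[OF seq, of v] by blast
    moreover have "bf_sim M k (x @ [u]) (y @ [l])"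
    proof (rule Suc.IH)
      show "list_tendsto (\<lambda>j. xs (r j) @ [u]) (x @ [u])"
        using list_tendsto_snoc[OF list_tendsto_subseq[OF Suc.prems(1) \<open>strict_mono r\<close>]] by simp
      show "list_tendsto (\<lambda>j. ys (r j) @ [v (r j)]) (y @ [l])"
        using list_tendsto_snoc[OF list_tendsto_subseq[OF Suc.prems(2) \<open>strict_mono r\<close>]]
          \<open>(v \<circ> r) \<longlonglongrightarrow> l\<close> by (simp add: comp_def)
    qed (rule v(2))
    ultimately show ?thesis by blast
  qed
  have backward: "\<exists>w\<in>M. bf_sim M k (x @ [w]) (y @ [u])" if "u \<in> M" for u
  proof -
    have "\<forall>j. \<exists>w\<in>M. bf_sim M k (xs j @ [w]) (ys j @ [u])"
      using Suc.prems(3) \<open>u \<in> M\<close> by simp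
    then obtain v where v: "\<And>j. v j \<in> M" "\<And>j. bf_sim M k (xs j @ [v j]) (ys j @ [u])"
      by metis
    then obtain l r where "l \<in> M" "strict_mono r" "(v \<circ> r) \<longlonglongrightarrow> l"
      using seq_compactE[OF seq, of v] by blast
    moreover have "bf_sim M k (x @ [l]) (y @ [u])"
    proof (rule Suc.IH)
      show "list_tendsto (\<lambda>j. xs (r j) @ [v (r j)]) (x @ [l])"
        using list_tendsto_snoc[OF list_tendsto_subseq[OF Suc.prems(1) \<open>strict_mono r\<close>]]
          \<open>(v \<circ> r) \<longlonglongrightarrow> l\<close> by (simp add: comp_def)
      show "list_tendsto (\<lambda>j. ys (r j) @ [u]) (y @ [u])"
        using list_tendsto_snoc[OF list_tendsto_subseq[OF Suc.prems(2) \<open>strict_mono r\<close>]] by simp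
    qed (rule v(2))
    ultimately show ?thesis by blast
  qed
  show ?case using forth backward by simp
qed

lemma SR_gt_omega_snoc:
  assumes "compact M" "SR_gt_omega M xs ys" "x \<in> M"
  obtains y where "y \<in> M" "SR_gt_omega M (xs @ [x]) (ys @ [y])"
proof -
  have "\<forall>k. \<exists>y\<in>M. bf_sim M k (xs @ [x]) (ys @ [y])"
    using assms(2,3) unfolding SR_gt_omega_def by (metis bf_sim.simps(2))
  then obtain v where v: "\<And>k. v k \<in> M" "\<And>k. bf_sim M k (xs @ [x]) (ys @ [v k])"
    by metis
  then obtain l r where "l \<in> M" "strict_mono r" "(v \<circ> r) \<longlonglongrightarrow> l"
    using seq_compactE[OF compact_imp_seq_compact[OF assms(1)], of v] by blast
  have "bf_sim M k (xs @ [x]) (ys @ [l])" for k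
  proof (rule bf_sim_limit[OF assms(1) list_tendsto_const])
    show "list_tendsto (\<lambda>j. ys @ [v (r (j + k))]) (ys @ [l])"
      using list_tendsto_snoc[OF list_tendsto_const]
        LIMSEQ_ignore_initial_segment[OF \<open>(v \<circ> r) \<longlonglongrightarrow> l\<close>, of k]
      by (simp add: comp_def)
    show "bf_sim M k (xs @ [x]) (ys @ [v (r (j + k))])" for j
      using bf_sim_antimono[of M k "r (j + k)"] v(2) seq_suble[OF \<open>strict_mono r\<close>, of "j + k"]
        assms(3) by auto
  qed
  then show thesis using that \<open>l \<in> M\<close> unfolding SR_gt_omega_def by blast
qed

lemma SR_gt_omega_extend_seq:
  assumes "compact M" "SR_gt_omega M xs ys" "range c \<subseteq> M"
  obtains g where "range g \<subseteq> M" "\<And>k. SR_gt_omega M (xs @ map c [0..<k]) (ys @ map g [0..<k])"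
proof -
  let ?P = "\<lambda>k zs. length zs = k \<and> set zs \<subseteq> M \<and> SR_gt_omega M (xs @ map c [0..<k]) (ys @ zs)"
  have "\<exists>f. \<forall>k. ?P k (f k) \<and> (\<exists>w. f (Suc k) = f k @ [w])"
  proof (rule dependent_nat_choice)
    show "\<exists>zs. ?P 0 zs" using assms(2) by auto
  next
    fix zs k assume "?P k zs"
    moreover obtain w where "w \<in> M" "SR_gt_omega M ((xs @ map c [0..<k]) @ [c k]) ((ys @ zs) @ [w])"
      using SR_gt_omega_snoc[OF assms(1)] \<open>?P k zs\<close> assms(3) by blast
    ultimately show "\<exists>zs'. ?P (Suc k) zs' \<and> (\<exists>w. zs' = zs @ [w])"
      by (intro exI[of _ "zs @ [w]"]) auto
  qed
  then obtain f where f: "\<And>k. ?P k (f k)" "\<And>k. \<exists>w. f (Suc k) = f k @ [w]" by blast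
  define g where "g k = f (Suc k) ! k" for k
  have f_eq: "f k = map g [0..<k]" for k
  proof (induction k)
    case 0
    show ?case using f(1)[of 0] by simp
  next
    case (Suc k)
    obtain w where "f (Suc k) = f k @ [w]" using f(2) by blast
    moreover have "g k = w" unfolding g_def using calculation f(1)[of k] by (metis nth_append_length)
    ultimately show ?case using Suc.IH by simp
  qed
  have "g k \<in> M" for k
    using f(1)[of "Suc k"] unfolding g_def by (auto dest: nth_mem)
  moreover have "SR_gt_omega M (xs @ map c [0..<k]) (ys @ map g [0..<k])" for k
    using f(1)[of k] f_eq[of k] by simp
  ultimately show thesis using that by blast
qed

lemma SR_gt_omega_dist_eq:
  assumes "SR_gt_omega M xs ys" "i < length xs" "j < length xs"
  shows "dist (xs!i) (xs!j) = dist (ys!i) (ys!j)"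
  using assms unfolding SR_gt_omega_def by (metis bf_sim.simps(1) partial_iso_iff_dist_eq)

lemma SR_gt_omega_length_eq:
  assumes "SR_gt_omega M xs ys"
  shows "length xs = length ys"
  using assms unfolding SR_gt_omega_def by (metis bf_sim.simps(1) partial_iso_iff_dist_eq)

lemma SR_gt_omega_back_dist:
  assumes "SR_gt_omega M xs ys" "y \<in> M"
  obtains x where "x \<in> M" "\<And>i. i < length xs \<Longrightarrow> dist (xs!i) x = dist (ys!i) y"
proof -
  obtain x where "x \<in> M" and iso: "partial_iso (xs @ [x]) (ys @ [y])"
    using assms unfolding SR_gt_omega_def by (metis bf_sim.simps)
  have "dist (xs!i) x = dist (ys!i) y" if "i < length xs" for i
  proof -
    have "length xs = length ys" using iso by (simp add: partial_iso_iff_dist_eq)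
    moreover have "dist ((xs @ [x])!i) ((xs @ [x])!length xs) = dist ((ys @ [y])!i) ((ys @ [y])!length xs)"
      using iso that unfolding partial_iso_iff_dist_eq by simp
    ultimately show ?thesis using that by (simp add: nth_append)
  qed
  then show thesis using that \<open>x \<in> M\<close> by blast
qed

lemma SR_gt_omega_isometric_embedding:
  assumes "compact M" "countable U" "U \<noteq> {}" "U \<subseteq> M" "SR_gt_omega M as bs"
  obtains h where "\<And>z. z \<in> U \<Longrightarrow> h z \<in> M"
    and "\<And>i z. i < length as \<Longrightarrow> z \<in> U \<Longrightarrow> dist (as!i) z = dist (bs!i) (h z)"
    and "\<And>y z. y \<in> U \<Longrightarrow> z \<in> U \<Longrightarrow> dist y z = dist (h y) (h z)"
    and "\<And>F x. finite F \<Longrightarrow> F \<subseteq> U \<Longrightarrow> x \<in> M \<Longrightarrow> \<exists>x'\<in>M. \<forall>z\<in>F. dist z x' = dist (h z) x"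
proof -
  define c where "c = from_nat_into U"
  have range_c: "range c = U" unfolding c_def using assms(2,3) by simp
  then obtain g where g: "range g \<subseteq> M" "\<And>k. SR_gt_omega M (as @ map c [0..<k]) (bs @ map g [0..<k])"
    using SR_gt_omega_extend_seq[OF assms(1,5)] assms(4) by blast
  let ?p = "length as"
  have len: "length bs = ?p" using SR_gt_omega_length_eq[OF assms(5)] by simp
  have dist_cc: "dist (c i) (c j) = dist (g i) (g j)" for i j
    using SR_gt_omega_dist_eq[OF g(2)[of "Suc (i + j)"], of "?p + i" "?p + j"] len
    by (simp add: nth_append del: upt_Suc)
  have dist_ac: "dist (as!l) (c i) = dist (bs!l) (g i)" if "l < ?p" for l i
    using SR_gt_omega_dist_eq[OF g(2)[of "Suc i"], of l "?p + i"] len that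
    by (simp add: nth_append del: upt_Suc)
  define h where "h z = g (SOME i. c i = z)" for z
  have h_c: "h (c i) = g i" for i
  proof -
    have "c (SOME j. c j = c i) = c i" by (rule someI) (rule refl)
    then show ?thesis unfolding h_def using dist_cc[of i "SOME j. c j = c i"] by simp
  qed
  show thesis
  proof
    show "h z \<in> M" if "z \<in> U" for z
      using that g(1) h_c range_c by auto
    show "dist (as!i) z = dist (bs!i) (h z)" if "i < ?p" "z \<in> U" for i z
      using that dist_ac h_c range_c by auto
    show "dist y z = dist (h y) (h z)" if "y \<in> U" "z \<in> U" for y z
      using that dist_cc h_c range_c by auto
    show "\<exists>x'\<in>M. \<forall>z\<in>F. dist z x' = dist (h z) x" if "finite F" "F \<subseteq> U" "x \<in> M" for F x
    proof -
      obtain I where "finite I" "F = c ` I"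
        using finite_subset_image[OF \<open>finite F\<close>, of c UNIV] \<open>F \<subseteq> U\<close> range_c by auto
      moreover obtain N where "I \<subseteq> {..<N}"
        using finite_nat_bounded[OF \<open>finite I\<close>] by blast
      ultimately have "F \<subseteq> c ` {..<N}" by blast
      obtain x' where "x' \<in> M" and x': "\<And>i. i < ?p + N \<Longrightarrow>
          dist ((as @ map c [0..<N])!i) x' = dist ((bs @ map g [0..<N])!i) x"
        using SR_gt_omega_back_dist[OF g(2) \<open>x \<in> M\<close>] by auto
      have "dist (c j) x' = dist (h (c j)) x" if "j < N" for j
        using x'[of "?p + j"] that len h_c by (simp add: nth_append del: upt_Suc)
      then have "\<forall>z\<in>F. dist z x' = dist (h z) x"
        using \<open>F \<subseteq> c ` {..<N}\<close> by fastforce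
      then show ?thesis using \<open>x' \<in> M\<close> by blast
    qed
  qed
qed

lemma compact_approx_system_of_isometry:
  assumes cover: "\<And>n. M \<inter> (\<Union>z\<in>A n. ball z (1 / 2^n)) = M"
    and h_M: "\<And>n z. z \<in> A n \<Longrightarrow> h z \<in> M"
    and h_params: "\<And>n i z. i < length as \<Longrightarrow> z \<in> A n \<Longrightarrow> dist (as!i) z = dist (bs!i) (h z)"
    and h_isometric: "\<And>m n y z. y \<in> A m \<Longrightarrow> z \<in> A n \<Longrightarrow> dist y z = dist (h y) (h z)"
    and h_dense: "\<And>n x. x \<in> M \<Longrightarrow> \<exists>z\<in>A n. dist (h z) x < 1 / 2^n"
  shows "\<exists>\<phi>. compact_approx_system M as bs A \<phi>"
proof
  define \<phi> where "\<phi> n z = (SOME w. w \<in> A n \<and> dist (h z) w < 1 / 2^n)" for n z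
  have \<phi>: "\<phi> n z \<in> A n \<and> dist (h z) (\<phi> n z) < 1 / 2^n" if "z \<in> A n" for n z
  proof -
    have "h z \<in> (\<Union>w\<in>A n. ball w (1 / 2^n))"
      using cover[of n] h_M[OF that] by blast
    then have "\<exists>w\<in>A n. dist (h z) w < 1 / 2^n"
      by (auto simp: dist_commute)
    then show ?thesis unfolding \<phi>_def by (metis (no_types, lifting) someI)
  qed
  show "compact_approx_system M as bs A \<phi>"
    unfolding compact_approx_system_def
  proof (intro allI conjI ballI impI)
    fix n
    show "\<phi> n z \<in> A n" if "z \<in> A n" for z
      using \<phi>[OF that] by blast
    show "\<bar>dist (as!i) z - dist (bs!i) (\<phi> n z)\<bar> < 1 / 2^n" if "i < length as" "z \<in> A n" for i z
    proof -
      have "\<bar>dist (bs!i) (h z) - dist (bs!i) (\<phi> n z)\<bar> \<le> dist (h z) (\<phi> n z)" by metric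
      then show ?thesis using h_params[OF that] \<phi>[OF that(2)] by simp
    qed
    show "\<bar>dist y z - dist (\<phi> m y) (\<phi> n z)\<bar> < 1 / 2^m + 1 / 2^n" if "y \<in> A m" "z \<in> A n" for m y z
    proof -
      have "\<bar>dist (h y) (h z) - dist (\<phi> m y) (\<phi> n z)\<bar> \<le> dist (h y) (\<phi> m y) + dist (h z) (\<phi> n z)"
        by metric
      then show ?thesis using h_isometric[OF that] \<phi>[OF that(1)] \<phi>[OF that(2)] by simp
    qed
    have "x \<in> (\<Union>z\<in>A n. ball (\<phi> n z) (2 / 2^n))" if "x \<in> M" for x
    proof -
      obtain z where "z \<in> A n" "dist (h z) x < 1 / 2^n" using h_dense \<open>x \<in> M\<close> by blast
      have "dist (\<phi> n z) x \<le> dist (h z) (\<phi> n z) + dist (h z) x" by metric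
      also have "\<dots> < 1 / 2^n + 1 / 2^n" using \<phi>[OF \<open>z \<in> A n\<close>] \<open>dist (h z) x < 1 / 2^n\<close> by simp
      finally show ?thesis using \<open>z \<in> A n\<close> by (auto simp: dist_commute)
    qed
    then show "M \<inter> (\<Union>z\<in>A n. ball (\<phi> n z) (2 / 2^n)) = M" by blast
  qed
qed

theorem lemma3p3:
  fixes M :: "'a::metric_space set" and as bs :: "'a list" and A :: "nat \<Rightarrow> 'a set"
  assumes "compact M"
    and "length as = p" and "length bs = p"
    and "set as \<subseteq> M" and "set bs \<subseteq> M"
    and "\<And>n. finite (A n)" and "\<And>n. A n \<subseteq> M"
    and "\<And>n. A n \<subseteq> A (Suc n)"
    and "\<And>n. M \<inter> (\<Union>z\<in>A n. ball z (1 / 2^n)) = M"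
    and "SR_gt_omega M as bs"
  shows "\<exists>\<phi>. compact_approx_system M as bs A \<phi>"
proof (cases "M = {}")
  case True
  then show ?thesis using assms(7) unfolding compact_approx_system_def by auto
next
  case False
  define U where "U = (\<Union>n. A n)"
  have "U \<noteq> {}" using False assms(9)[of 0] unfolding U_def by auto
  have "countable U" "U \<subseteq> M"
    unfolding U_def using assms(6,7) by (auto intro: countable_finite)
  obtain h where h_M: "\<And>z. z \<in> U \<Longrightarrow> h z \<in> M"
    and h_params: "\<And>i z. i < length as \<Longrightarrow> z \<in> U \<Longrightarrow> dist (as!i) z = dist (bs!i) (h z)"
    and h_isometric: "\<And>y z. y \<in> U \<Longrightarrow> z \<in> U \<Longrightarrow> dist y z = dist (h y) (h z)"
    and h_back: "\<And>F x. finite F \<Longrightarrow> F \<subseteq> U \<Longrightarrow> x \<in> M \<Longrightarrow> \<exists>x'\<in>M. \<forall>z\<in>F. dist z x' = dist (h z) x"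
    using SR_gt_omega_isometric_embedding[OF assms(1) \<open>countable U\<close> \<open>U \<noteq> {}\<close> \<open>U \<subseteq> M\<close> assms(10)]
    by blast
  have A_U: "A n \<subseteq> U" for n unfolding U_def by blast
  have "\<exists>z\<in>A n. dist (h z) x < 1 / 2^n" if "x \<in> M" for n x
  proof -
    obtain x' where "x' \<in> M" "\<forall>z\<in>A n. dist z x' = dist (h z) x"
      using h_back[OF assms(6) A_U \<open>x \<in> M\<close>] by blast
    moreover have "x' \<in> (\<Union>z\<in>A n. ball z (1 / 2^n))"
      using assms(9)[of n] \<open>x' \<in> M\<close> by blast
    then obtain z where "z \<in> A n" "dist z x' < 1 / 2^n" by auto
    ultimately show ?thesis by auto
  qed
  then show ?thesis
    using h_M h_params h_isometric A_U
    by (intro compact_approx_system_of_isometry[OF assms(9)]) blast+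
qed

end
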